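(* Let $\hat\xi_1,\dots,\hat\xi_T\in\mathbb{R}^n$, $\kappa>0$, and let $\mathcal{U}\subseteq\mathcal{P}$ be nonempty, closed and convex, with $\hat\Sigma(p)$ positive definite for every $p\in\mathcal{U}$. For $p\in\mathcal{U}$ let $y^{\mathrm{RP}}(p)$ be the unique minimizer of $y\mapsto f_{\mathrm{RP}}(y,p)$ over $\mathbb{R}^n_{++}$ and set $\phi(p)=f_{\mathrm{RP}}(y^{\mathrm{RP}}(p),p)$. Let $(y^*,p^* )\in\mathbb{R}^n_{++}\times\mathcal{U}$ be a saddle point of $f_{\mathrm{RP}}$ on $\mathbb{R}^n_{++}\times\mathcal{U}$. Fix $\gamma>0$ and $p^0\in\mathcal{U}$, and define for $j\ge0$ $$y^j=y^{\mathrm{RP}}(p^j),\qquad p^{j+1}=\Pi_{\mathcal{U}}\big(p^j+\gamma\,\nabla_p f_{\mathrm{RP}}(y^j,p^j)\big),$$ where $\nabla_p f_{\mathrm{RP}}(y,p)=\tfrac12\hat\pi^2(y)-\hat\Theta(y)p$ and $\Pi_{\mathcal{U}}$ is the Euclidean projection onto $\mathcal{U}$. Suppose $L\ge0$ satisfies $\|\nabla_p f_{\mathrm{RP}}(y^j,p^j)\|_2\le L$ for all $j\ge0$. Then for every $k\ge1$, $$0\le \phi(p^* )-\frac1k\sum_{j=0}^{k-1}\phi(p^j)\le\frac{\|p^0-p^*\|_2^2}{2k\gamma}+\frac{\gamma L^2}{2}.$$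
   Context: $\mathcal{P}=\{p\in\mathbb{R}^T:p\ge0,\mathbf{1}^\top p=1\}$; $\mathbb{R}^n_{++}$ is the open positive orthant. $\hat\mu(p)=\sum_t p_t\hat\xi_t$, $\hat\Sigma(p)=\sum_t p_t(\hat\xi_t-\hat\mu(p))(\hat\xi_t-\hat\mu(p))^\top$. $\hat\pi(y)\in\mathbb{R}^T$ has entries $\hat\xi_t^\top y$, $\hat\pi^2(y)$ its entrywise square, $\hat\Theta(y)=\hat\pi(y)\hat\pi(y)^\top$, and $f_{\mathrm{RP}}(y,p)=\tfrac12\big(p^\top\hat\pi^2(y)-p^\top\hat\Theta(y)p\big)-\kappa\sum_{i=1}^n\ln y_i$. A saddle point $(y^*,p^* )$ means $f_{\mathrm{RP}}(y^*,p)\le f_{\mathrm{RP}}(y^*,p^* )\le f_{\mathrm{RP}}(y,p^* )$ for all $y\in\mathbb{R}^n_{++}$, $p\in\mathcal{U}$. (The paper phrases the bound on the gradient as a Lipschitz constant $L$ of $\nabla_p f_{\mathrm{RP}}$, used as a bound on the gradient norm along the iterates.) *)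

theory Defs
  imports "HOL-Analysis.Analysis"
begin

text \<open>Scenarios are indexed by a finite type 't (T = CARD('t)), assets by a finite
  type 'n (n = CARD('n)). The data are xi :: 't => real^'n.\<close>

definition prob_simplex :: "(real^'t::finite) set" where
  "prob_simplex = {p. (\<forall>t. 0 \<le> p $ t) \<and> (\<Sum>t\<in>UNIV. p $ t) = 1}"

definition pos_orthant :: "(real^'n::finite) set" where
  "pos_orthant = {y. \<forall>i. 0 < y $ i}"

definition mu_hat :: "('t::finite \<Rightarrow> real^'n::finite) \<Rightarrow> real^'t \<Rightarrow> real^'n" where
  "mu_hat xi p = (\<Sum>t\<in>UNIV. (p $ t) *\<^sub>R xi t)"

definition outer_prod :: "real^'n::finite \<Rightarrow> real^'n \<Rightarrow> real^'n^'n" where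
  "outer_prod a b = (\<chi> i j. a $ i * b $ j)"

definition Sigma_hat :: "('t::finite \<Rightarrow> real^'n::finite) \<Rightarrow> real^'t \<Rightarrow> real^'n^'n" where
  "Sigma_hat xi p = (\<Sum>t\<in>UNIV. (p $ t) *\<^sub>R outer_prod (xi t - mu_hat xi p) (xi t - mu_hat xi p))"

definition pos_definite :: "real^'n::finite^'n \<Rightarrow> bool" where
  "pos_definite M \<longleftrightarrow> (\<forall>x. x \<noteq> 0 \<longrightarrow> 0 < x \<bullet> (M *v x))"

definition pi_hat :: "('t::finite \<Rightarrow> real^'n::finite) \<Rightarrow> real^'n \<Rightarrow> real^'t" where
  "pi_hat xi y = (\<chi> t. xi t \<bullet> y)"

definition pi2_hat :: "('t::finite \<Rightarrow> real^'n::finite) \<Rightarrow> real^'n \<Rightarrow> real^'t" where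
  "pi2_hat xi y = (\<chi> t. (pi_hat xi y $ t)^2)"

definition Theta_hat :: "('t::finite \<Rightarrow> real^'n::finite) \<Rightarrow> real^'n \<Rightarrow> real^'t^'t" where
  "Theta_hat xi y = (\<chi> s t. pi_hat xi y $ s * pi_hat xi y $ t)"

definition f_RP :: "('t::finite \<Rightarrow> real^'n::finite) \<Rightarrow> real \<Rightarrow> real^'n \<Rightarrow> real^'t \<Rightarrow> real" where
  "f_RP xi \<kappa> y p = (1/2) * (p \<bullet> pi2_hat xi y - p \<bullet> (Theta_hat xi y *v p))
                      - \<kappa> * (\<Sum>i\<in>UNIV. ln (y $ i))"

definition grad_p_f_RP :: "('t::finite \<Rightarrow> real^'n::finite) \<Rightarrow> real^'n \<Rightarrow> real^'t \<Rightarrow> real^'t" where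
  "grad_p_f_RP xi y p = (1/2) *\<^sub>R pi2_hat xi y - Theta_hat xi y *v p"

definition y_RP :: "('t::finite \<Rightarrow> real^'n::finite) \<Rightarrow> real \<Rightarrow> real^'t \<Rightarrow> real^'n" where
  "y_RP xi \<kappa> p = (THE y. y \<in> pos_orthant \<and> (\<forall>z\<in>pos_orthant. f_RP xi \<kappa> y p \<le> f_RP xi \<kappa> z p))"

definition phi_RP :: "('t::finite \<Rightarrow> real^'n::finite) \<Rightarrow> real \<Rightarrow> real^'t \<Rightarrow> real" where
  "phi_RP xi \<kappa> p = f_RP xi \<kappa> (y_RP xi \<kappa> p) p"

definition saddle_point :: "('t::finite \<Rightarrow> real^'n::finite) \<Rightarrow> real \<Rightarrow> (real^'t) set \<Rightarrow> real^'n \<Rightarrow> real^'t \<Rightarrow> bool" where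
  "saddle_point xi \<kappa> U ys ps \<longleftrightarrow> ys \<in> pos_orthant \<and> ps \<in> U \<and>
     (\<forall>p\<in>U. f_RP xi \<kappa> ys p \<le> f_RP xi \<kappa> ys ps) \<and>
     (\<forall>y\<in>pos_orthant. f_RP xi \<kappa> ys ps \<le> f_RP xi \<kappa> y ps)"

end

theory Submission
  imports Defs "HOL-Real_Asymp.Real_Asymp"
begin

text \<open>For p with positive definite covariance, the variance identity
  p \<bullet> pi2(y) - (p \<bullet> pi(y))^2 = y \<bullet> Sigma(p) y turns f_RP(-, p) into the log-barrier problem
  y \<bullet> Sigma(p) y / 2 - \<kappa> \<Sum>i ln y_i, which is strictly convex and coercive on the open orthant;
  so y_RP(p) is its unique minimiser and \<phi>(p) = min_y f_RP(y, p).
  The saddle property gives \<phi>(p) \<le> f_RP(y*, p) \<le> f_RP(y*, p*) = \<phi>(p*), the lower bound.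
  Since f_RP(y, -) is a concave quadratic, with g_j the p-gradient at (y_j, p_j),
  \<phi>(p*) - \<phi>(p_j) \<le> f_RP(y_j, p*) - f_RP(y_j, p_j) \<le> g_j \<bullet> (p* - p_j),
  and nonexpansiveness of the projection turns this into
  2\<gamma> (\<phi>(p*) - \<phi>(p_j)) \<le> |p_j - p*|^2 - |p_(j+1) - p*|^2 + \<gamma>^2 L^2, which telescopes.\<close>

section \<open>Positive definite quadratic forms\<close>

lemma quadratic_form_scaleR:
  "(r *\<^sub>R x) \<bullet> (A *v (r *\<^sub>R x)) = r\<^sup>2 * (x \<bullet> (A *v (x::real^'n::finite)))"
  by (simp add: matrix_vector_mult_scaleR power2_eq_square)

lemma pos_definite_coercive:
  fixes A :: "real^'n::finite^'n"
  assumes "pos_definite A"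
  obtains l where "l > 0" "\<And>x. l * (norm x)\<^sup>2 \<le> x \<bullet> (A *v x)"
proof -
  have "continuous_on (sphere 0 1) (\<lambda>x::real^'n. x \<bullet> (A *v x))"
    by (intro continuous_intros)
  moreover have "sphere (0::real^'n) 1 \<noteq> {}"
    by simp
  ultimately obtain u where u: "u \<in> sphere 0 1"
    and u_min: "\<And>v. v \<in> sphere 0 1 \<Longrightarrow> u \<bullet> (A *v u) \<le> v \<bullet> (A *v v)"
    using continuous_attains_inf[OF compact_sphere] by blast
  have "u \<noteq> 0"
    using u by auto
  then have pos: "u \<bullet> (A *v u) > 0"
    using assms by (simp add: pos_definite_def)
  have "u \<bullet> (A *v u) * (norm x)\<^sup>2 \<le> x \<bullet> (A *v x)" for x
  proof (cases "x = 0")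
    case False
    define v where "v = (1 / norm x) *\<^sub>R x"
    have "x = norm x *\<^sub>R v"
      using False by (simp add: v_def)
    then have "x \<bullet> (A *v x) = (norm x)\<^sup>2 * (v \<bullet> (A *v v))"
      by (metis quadratic_form_scaleR)
    moreover have "u \<bullet> (A *v u) \<le> v \<bullet> (A *v v)"
      using False by (intro u_min) (simp add: v_def)
    ultimately show ?thesis
      by (metis mult.commute mult_right_mono zero_le_power2)
  qed simp
  with pos that show ?thesis by blast
qed

lemma quadratic_form_parallelogram:
  fixes A :: "real^'n::finite^'n"
  shows "(u + v) \<bullet> (A *v (u + v)) + (u - v) \<bullet> (A *v (u - v)) = 2 * (u \<bullet> (A *v u)) + 2 * (v \<bullet> (A *v v))"
  by (simp add: matrix_vector_right_distrib matrix_vector_mult_diff_distrib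
      inner_add_left inner_add_right inner_diff_left inner_diff_right)

section \<open>The log-barrier problem\<close>

definition barrier_objective :: "real^'n::finite^'n \<Rightarrow> real \<Rightarrow> real^'n \<Rightarrow> real" where
  "barrier_objective A \<kappa> y = (1/2) * (y \<bullet> (A *v y)) - \<kappa> * (\<Sum>i\<in>UNIV. ln (y $ i))"

lemma barrier_objective_ge_separable:
  fixes A :: "real^'n::finite^'n"
  assumes "\<And>x. l * (norm x)\<^sup>2 \<le> x \<bullet> (A *v x)"
  shows "(\<Sum>i\<in>UNIV. l/2 * (y $ i)\<^sup>2 - \<kappa> * ln (y $ i)) \<le> barrier_objective A \<kappa> y"
proof -
  have "(norm y)\<^sup>2 = (\<Sum>i\<in>UNIV. (y $ i)\<^sup>2)"
    unfolding power2_norm_eq_inner inner_vec_def by (simp add: power2_eq_square)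
  then have "(\<Sum>i\<in>UNIV. l/2 * (y $ i)\<^sup>2) = l/2 * (norm y)\<^sup>2"
    by (simp add: sum_distrib_left)
  then show ?thesis
    using assms[of y] by (simp add: barrier_objective_def sum_subtractf sum_distrib_left)
qed

lemma barrier_term_lower_bound:
  fixes l \<kappa> s :: real
  assumes "l > 0" "\<kappa> \<ge> 0" "s > 0"
  shows "\<kappa> - \<kappa>\<^sup>2 / (2 * l) \<le> l/2 * s\<^sup>2 - \<kappa> * ln s"
proof -
  have "0 \<le> l/2 * (s - \<kappa> / l)\<^sup>2"
    using assms by simp
  also have "\<dots> = l/2 * s\<^sup>2 - \<kappa> * s + \<kappa>\<^sup>2 / (2 * l)"
    using assms by (simp add: power2_eq_square field_simps)
  finally show ?thesis
    using mult_left_mono[OF ln_le_minus_one[OF \<open>s > 0\<close>] \<open>\<kappa> \<ge> 0\<close>]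
    by (simp add: algebra_simps)
qed

lemma barrier_term_coercive:
  fixes l \<kappa> M :: real
  assumes "l > 0" "\<kappa> > 0"
  obtains a b where "0 < a" "a \<le> 1" "1 \<le> b"
    "\<And>s. 0 < s \<Longrightarrow> s < a \<or> b < s \<Longrightarrow> M < l/2 * s\<^sup>2 - \<kappa> * ln s"
proof -
  have "filterlim (\<lambda>s. l/2 * s\<^sup>2 - \<kappa> * ln s) at_top (at_right 0)"
    using assms by real_asymp
  then have "eventually (\<lambda>s. M < l/2 * s\<^sup>2 - \<kappa> * ln s) (at_right 0)"
    by (simp add: filterlim_at_top_dense)
  then obtain a where "0 < a" and a: "\<And>s. 0 < s \<Longrightarrow> s < a \<Longrightarrow> M < l/2 * s\<^sup>2 - \<kappa> * ln s"
    by (auto simp: eventually_at_right_field)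
  have "filterlim (\<lambda>s. l/2 * s\<^sup>2 - \<kappa> * ln s) at_top at_top"
    using assms by real_asymp
  then have "eventually (\<lambda>s. M < l/2 * s\<^sup>2 - \<kappa> * ln s) at_top"
    by (simp add: filterlim_at_top_dense)
  then obtain b where b: "\<And>s. b \<le> s \<Longrightarrow> M < l/2 * s\<^sup>2 - \<kappa> * ln s"
    by (auto simp: eventually_at_top_linorder)
  show ?thesis
    by (rule that[of "min a 1" "max b 1"]) (use \<open>0 < a\<close> a b in auto)
qed

lemma barrier_objective_outside_box:
  fixes A :: "real^'n::finite^'n"
  assumes A: "pos_definite A" and \<kappa>: "\<kappa> > 0"
  obtains a b where "0 < a" "a \<le> 1" "1 \<le> b"
    "\<And>y. y \<in> pos_orthant \<Longrightarrow> \<not> (\<forall>i. a \<le> y $ i \<and> y $ i \<le> b)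
      \<Longrightarrow> barrier_objective A \<kappa> 1 < barrier_objective A \<kappa> y"
proof -
  obtain l where l: "l > 0" and coercive: "\<And>x. l * (norm x)\<^sup>2 \<le> x \<bullet> (A *v x)"
    using pos_definite_coercive[OF A] by blast
  define h where "h s = l/2 * s\<^sup>2 - \<kappa> * ln s" for s
  \<comment> \<open>h is bounded below by m on (0, \<infinity>) and blows up at both ends, so one coordinate
    outside [a, b] lifts the separable lower bound above the value at 1.\<close>
  define m where "m = \<kappa> - \<kappa>\<^sup>2 / (2 * l)"
  define M where "M = barrier_objective A \<kappa> 1 - real (CARD('n) - 1) * m"
  have h_ge: "m \<le> h s" if "s > 0" for s
    unfolding h_def m_def using barrier_term_lower_bound[OF l _ that] \<kappa> by simp
  obtain a b where ab: "0 < a" "a \<le> 1" "1 \<le> b"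
    and escape: "\<And>s. 0 < s \<Longrightarrow> s < a \<or> b < s \<Longrightarrow> M < h s"
    using barrier_term_coercive[OF l \<kappa>, of M] unfolding h_def by blast
  show ?thesis
  proof (rule that[OF ab])
    fix y :: "real^'n"
    assume y: "y \<in> pos_orthant" and "\<not> (\<forall>i. a \<le> y $ i \<and> y $ i \<le> b)"
    then obtain i where i: "y $ i < a \<or> b < y $ i"
      by (auto simp: not_le)
    have pos: "0 < y $ j" for j
      using y by (simp add: pos_orthant_def)
    have "real (CARD('n) - 1) * m \<le> (\<Sum>j\<in>UNIV - {i}. h (y $ j))"
      using sum_bounded_below[of "UNIV - {i}" m "\<lambda>j. h (y $ j)"] h_ge pos
      by (simp add: card_Diff_singleton)
    moreover have "M < h (y $ i)"
      using escape[OF pos i] .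
    moreover have "(\<Sum>j\<in>UNIV. h (y $ j)) = h (y $ i) + (\<Sum>j\<in>UNIV - {i}. h (y $ j))"
      by (simp add: sum.remove)
    moreover have "(\<Sum>j\<in>UNIV. h (y $ j)) \<le> barrier_objective A \<kappa> y"
      unfolding h_def by (rule barrier_objective_ge_separable[OF coercive])
    ultimately show "barrier_objective A \<kappa> 1 < barrier_objective A \<kappa> y"
      unfolding M_def by linarith
  qed
qed

lemma barrier_objective_attains_min:
  fixes A :: "real^'n::finite^'n"
  assumes A: "pos_definite A" and \<kappa>: "\<kappa> > 0"
  obtains y where "y \<in> pos_orthant" "\<And>z. z \<in> pos_orthant \<Longrightarrow> barrier_objective A \<kappa> y \<le> barrier_objective A \<kappa> z"
proof -
  obtain a b where ab: "0 < a" "a \<le> 1" "1 \<le> b"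
    and outside: "\<And>y. y \<in> pos_orthant \<Longrightarrow> \<not> (\<forall>i. a \<le> y $ i \<and> y $ i \<le> b)
      \<Longrightarrow> barrier_objective A \<kappa> 1 < barrier_objective A \<kappa> y"
    using barrier_objective_outside_box[OF A \<kappa>] by blast
  define K where "K = cbox (\<chi> i. a) (\<chi> i. b :: real^'n)"
  have K_iff: "y \<in> K \<longleftrightarrow> (\<forall>i. a \<le> y $ i \<and> y $ i \<le> b)" for y
    by (simp add: K_def mem_box_cart)
  have K_pos: "K \<subseteq> pos_orthant"
    using ab by (auto simp: K_iff pos_orthant_def intro: less_le_trans)
  have one_K: "1 \<in> K"
    using ab by (simp add: K_iff)
  have "continuous_on K (barrier_objective A \<kappa>)"
    unfolding barrier_objective_def
    by (intro continuous_intros) (use K_pos in \<open>auto simp: pos_orthant_def less_le\<close>)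
  then obtain y where y: "y \<in> K" and y_min: "\<And>z. z \<in> K \<Longrightarrow> barrier_objective A \<kappa> y \<le> barrier_objective A \<kappa> z"
    using continuous_attains_inf[of K] compact_cbox one_K unfolding K_def by blast
  show ?thesis
  proof (rule that)
    show "y \<in> pos_orthant"
      using y K_pos by blast
    show "barrier_objective A \<kappa> y \<le> barrier_objective A \<kappa> z" if "z \<in> pos_orthant" for z
      using y_min[of z] y_min[OF one_K] outside[OF that] by (force simp: K_iff)
  qed
qed

lemma ln_add_le_two_ln_mean:
  fixes a b :: real
  assumes "0 < a" "0 < b"
  shows "ln a + ln b \<le> 2 * ln ((a + b) / 2)"
proof -
  have "a * b \<le> ((a + b) / 2)\<^sup>2"
    using sum_squares_ge_zero[of "a - b" 0] by (simp add: power2_eq_square field_simps)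
  then have "ln (a * b) \<le> ln (((a + b) / 2)\<^sup>2)"
    using assms by simp
  then show ?thesis
    using assms by (simp add: ln_mult ln_realpow)
qed

lemma barrier_objective_midpoint_less:
  fixes A :: "real^'n::finite^'n"
  assumes A: "pos_definite A" and \<kappa>: "\<kappa> \<ge> 0"
    and y: "y \<in> pos_orthant" and z: "z \<in> pos_orthant" and "y \<noteq> z"
  shows "2 * barrier_objective A \<kappa> ((1/2) *\<^sub>R (y + z)) < barrier_objective A \<kappa> y + barrier_objective A \<kappa> z"
proof -
  define w where "w = (1/2) *\<^sub>R (y + z)"
  define L where "L v = \<kappa> * (\<Sum>i\<in>UNIV. ln (v $ i))" for v :: "real^'n"
  have "(\<Sum>i\<in>UNIV. ln (y $ i)) + (\<Sum>i\<in>UNIV. ln (z $ i)) \<le> 2 * (\<Sum>i\<in>UNIV. ln (w $ i))"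
    unfolding sum.distrib[symmetric] sum_distrib_left
    by (rule sum_mono) (use y z ln_add_le_two_ln_mean in \<open>auto simp: w_def pos_orthant_def\<close>)
  then have "L y + L z \<le> 2 * L w"
    unfolding L_def using mult_left_mono[OF _ \<kappa>] by (fastforce simp: algebra_simps)
  moreover have "w \<bullet> (A *v w) = 1/4 * ((y + z) \<bullet> (A *v (y + z)))"
    unfolding w_def quadratic_form_scaleR by (simp add: power2_eq_square)
  moreover have "(y - z) \<bullet> (A *v (y - z)) > 0"
    using A \<open>y \<noteq> z\<close> by (simp add: pos_definite_def)
  ultimately show ?thesis
    using quadratic_form_parallelogram[of y z A]
    unfolding barrier_objective_def w_def[symmetric] L_def[symmetric]
    by argo
qed

lemma ex1_barrier_objective_min:
  fixes A :: "real^'n::finite^'n"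
  assumes A: "pos_definite A" and \<kappa>: "\<kappa> > 0"
  shows "\<exists>!y. y \<in> pos_orthant \<and> (\<forall>z\<in>pos_orthant. barrier_objective A \<kappa> y \<le> barrier_objective A \<kappa> z)"
proof -
  obtain y where y: "y \<in> pos_orthant" "\<And>z. z \<in> pos_orthant \<Longrightarrow> barrier_objective A \<kappa> y \<le> barrier_objective A \<kappa> z"
    using barrier_objective_attains_min[OF A \<kappa>] by blast
  have "z = y"
    if z: "z \<in> pos_orthant" "\<forall>w\<in>pos_orthant. barrier_objective A \<kappa> z \<le> barrier_objective A \<kappa> w" for z
  proof (rule ccontr)
    assume "z \<noteq> y"
    define w where "w = (1/2) *\<^sub>R (z + y)"
    have "w \<in> pos_orthant"
      using y(1) z(1) by (auto simp: w_def pos_orthant_def add_pos_pos)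
    then have "barrier_objective A \<kappa> z \<le> barrier_objective A \<kappa> w" "barrier_objective A \<kappa> y \<le> barrier_objective A \<kappa> w"
      using y(2) z(2) by auto
    with barrier_objective_midpoint_less[OF A less_imp_le[OF \<kappa>] z(1) y(1) \<open>z \<noteq> y\<close>, folded w_def]
    show False
      by argo
  qed
  with y show ?thesis
    by blast
qed

section \<open>The risk-parity objective\<close>

lemma outer_prod_mult: "outer_prod a b *v x = (b \<bullet> x) *\<^sub>R a"
  by (simp add: outer_prod_def vec_eq_iff matrix_vector_mult_def inner_vec_def sum_distrib_left mult_ac)

lemma sum_scaleR_matrix_vector_mult:
  fixes M :: "'t \<Rightarrow> real^'n::finite^'m::finite"
  shows "(\<Sum>t\<in>S. c t *\<^sub>R M t) *v x = (\<Sum>t\<in>S. c t *\<^sub>R (M t *v x))"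
  by (induction S rule: infinite_finite_induct)
    (simp_all add: matrix_vector_mult_add_rdistrib scaleR_matrix_vector_assoc)

lemma Sigma_hat_quadratic_form:
  "x \<bullet> (Sigma_hat xi p *v x) = (\<Sum>t\<in>UNIV. p $ t * ((xi t - mu_hat xi p) \<bullet> x)\<^sup>2)"
  by (simp add: Sigma_hat_def sum_scaleR_matrix_vector_mult outer_prod_mult inner_sum_right
      power2_eq_square inner_commute mult_ac)

lemma Theta_hat_mult: "Theta_hat xi y *v p = (p \<bullet> pi_hat xi y) *\<^sub>R pi_hat xi y"
  by (simp add: Theta_hat_def vec_eq_iff matrix_vector_mult_def inner_vec_def
      sum_distrib_left sum_distrib_right mult.commute mult.left_commute)

lemma variance_identity:
  assumes "(\<Sum>t\<in>UNIV. p $ t) = 1"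
  shows "p \<bullet> pi2_hat xi y - (p \<bullet> pi_hat xi y)\<^sup>2 = y \<bullet> (Sigma_hat xi p *v y)"
proof -
  define m where "m = p \<bullet> pi_hat xi y"
  have "mu_hat xi p \<bullet> y = m"
    unfolding m_def mu_hat_def inner_sum_left inner_vec_def pi_hat_def
    by (simp add: sum_distrib_left sum_distrib_right mult.assoc mult.left_commute; rule sum.swap)
  then have "y \<bullet> (Sigma_hat xi p *v y) = (\<Sum>t\<in>UNIV. p $ t * ((xi t \<bullet> y)\<^sup>2 + m\<^sup>2 - 2 * (xi t \<bullet> y) * m))"
    by (simp add: Sigma_hat_quadratic_form inner_diff_left power2_diff)
  also have "\<dots> = p \<bullet> pi2_hat xi y - 2 * m * (p \<bullet> pi_hat xi y) + m\<^sup>2 * (\<Sum>t\<in>UNIV. p $ t)"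
    by (simp add: algebra_simps sum.distrib sum_subtractf sum_distrib_left sum_distrib_right
        inner_vec_def pi2_hat_def pi_hat_def)
  finally show ?thesis
    using assms by (simp add: m_def power2_eq_square)
qed

lemma f_RP_eq_barrier_objective:
  assumes "(\<Sum>t\<in>UNIV. p $ t) = 1"
  shows "f_RP xi \<kappa> y p = barrier_objective (Sigma_hat xi p) \<kappa> y"
proof -
  have "p \<bullet> (Theta_hat xi y *v p) = (p \<bullet> pi_hat xi y)\<^sup>2"
    by (simp add: Theta_hat_mult power2_eq_square)
  then show ?thesis
    using variance_identity[OF assms, of xi y] by (simp add: f_RP_def barrier_objective_def)
qed

lemma ex1_f_RP_min:
  assumes "(\<Sum>t\<in>UNIV. p $ t) = 1" "pos_definite (Sigma_hat xi p)" "\<kappa> > 0"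
  shows "\<exists>!y. y \<in> pos_orthant \<and> (\<forall>z\<in>pos_orthant. f_RP xi \<kappa> y p \<le> f_RP xi \<kappa> z p)"
  using ex1_barrier_objective_min[OF assms(2,3)] by (simp add: f_RP_eq_barrier_objective[OF assms(1)])

lemma y_RP_minimizer:
  assumes "(\<Sum>t\<in>UNIV. p $ t) = 1" "pos_definite (Sigma_hat xi p)" "\<kappa> > 0"
  shows "y_RP xi \<kappa> p \<in> pos_orthant"
    and "z \<in> pos_orthant \<Longrightarrow> f_RP xi \<kappa> (y_RP xi \<kappa> p) p \<le> f_RP xi \<kappa> z p"
  using theI'[OF ex1_f_RP_min[OF assms]] unfolding y_RP_def[symmetric] by auto

lemma y_RP_eqI:
  assumes "(\<Sum>t\<in>UNIV. p $ t) = 1" "pos_definite (Sigma_hat xi p)" "\<kappa> > 0"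
    and "y \<in> pos_orthant" "\<And>z. z \<in> pos_orthant \<Longrightarrow> f_RP xi \<kappa> y p \<le> f_RP xi \<kappa> z p"
  shows "y_RP xi \<kappa> p = y"
  unfolding y_RP_def using ex1_f_RP_min[OF assms(1-3)] assms(4,5) by (intro the1_equality) auto

lemma f_RP_le_linearization:
  "f_RP xi \<kappa> y q \<le> f_RP xi \<kappa> y p + grad_p_f_RP xi y p \<bullet> (q - p)"
proof -
  define a where "a = q \<bullet> pi_hat xi y"
  define b where "b = p \<bullet> pi_hat xi y"
  have "grad_p_f_RP xi y p \<bullet> (q - p) = (1/2) * (q \<bullet> pi2_hat xi y - p \<bullet> pi2_hat xi y) - b * (a - b)"
    by (simp add: grad_p_f_RP_def Theta_hat_mult a_def b_def inner_commute algebra_simps)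
  moreover have "f_RP xi \<kappa> y q - f_RP xi \<kappa> y p = (1/2) * (q \<bullet> pi2_hat xi y - p \<bullet> pi2_hat xi y) - (1/2) * (a\<^sup>2 - b\<^sup>2)"
    by (simp add: f_RP_def Theta_hat_mult a_def b_def power2_eq_square algebra_simps)
  moreover have "a\<^sup>2 - b\<^sup>2 - 2 * b * (a - b) = (a - b)\<^sup>2"
    by (simp add: power2_eq_square algebra_simps)
  ultimately have "f_RP xi \<kappa> y q = f_RP xi \<kappa> y p + grad_p_f_RP xi y p \<bullet> (q - p) - (1/2) * (a - b)\<^sup>2"
    by argo
  then show ?thesis
    by simp
qed

context
  fixes xi :: "'t::finite \<Rightarrow> real^'n::finite" and \<kappa> :: real and U :: "(real^'t) set"
    and ys :: "real^'n" and ps :: "real^'t"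
  assumes kappa: "\<kappa> > 0"
    and U_simplex: "U \<subseteq> prob_simplex"
    and Sigma_pd: "\<forall>q\<in>U. pos_definite (Sigma_hat xi q)"
    and saddle: "saddle_point xi \<kappa> U ys ps"
begin

lemma y_RP_minimizer_on:
  assumes "q \<in> U"
  shows "y_RP xi \<kappa> q \<in> pos_orthant"
    and "z \<in> pos_orthant \<Longrightarrow> f_RP xi \<kappa> (y_RP xi \<kappa> q) q \<le> f_RP xi \<kappa> z q"
proof -
  have "(\<Sum>t\<in>UNIV. q $ t) = 1" "pos_definite (Sigma_hat xi q)"
    using assms U_simplex Sigma_pd by (auto simp: prob_simplex_def)
  then show "y_RP xi \<kappa> q \<in> pos_orthant"
    and "z \<in> pos_orthant \<Longrightarrow> f_RP xi \<kappa> (y_RP xi \<kappa> q) q \<le> f_RP xi \<kappa> z q"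
    using y_RP_minimizer[OF _ _ kappa] by blast+
qed

lemma phi_RP_saddle: "phi_RP xi \<kappa> ps = f_RP xi \<kappa> ys ps"
proof -
  have "ps \<in> U" "ys \<in> pos_orthant" "\<And>y. y \<in> pos_orthant \<Longrightarrow> f_RP xi \<kappa> ys ps \<le> f_RP xi \<kappa> y ps"
    using saddle by (auto simp: saddle_point_def)
  then have "y_RP xi \<kappa> ps = ys"
    using U_simplex Sigma_pd by (intro y_RP_eqI[OF _ _ kappa]) (auto simp: prob_simplex_def)
  then show ?thesis
    by (simp add: phi_RP_def)
qed

lemma phi_RP_le_saddle:
  assumes "q \<in> U"
  shows "phi_RP xi \<kappa> q \<le> phi_RP xi \<kappa> ps"
proof -
  have "phi_RP xi \<kappa> q \<le> f_RP xi \<kappa> ys q"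
    unfolding phi_RP_def using y_RP_minimizer_on[OF assms] saddle by (simp add: saddle_point_def)
  also have "\<dots> \<le> f_RP xi \<kappa> ys ps"
    using saddle assms by (simp add: saddle_point_def)
  finally show ?thesis
    by (simp add: phi_RP_saddle)
qed

lemma saddle_gap_le_supergradient:
  assumes "q \<in> U"
  shows "phi_RP xi \<kappa> ps - phi_RP xi \<kappa> q \<le> grad_p_f_RP xi (y_RP xi \<kappa> q) q \<bullet> (ps - q)"
proof -
  have "phi_RP xi \<kappa> ps \<le> f_RP xi \<kappa> (y_RP xi \<kappa> q) ps"
    using saddle y_RP_minimizer_on(1)[OF assms] by (simp add: phi_RP_saddle saddle_point_def)
  also have "\<dots> \<le> phi_RP xi \<kappa> q + grad_p_f_RP xi (y_RP xi \<kappa> q) q \<bullet> (ps - q)"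
    unfolding phi_RP_def by (rule f_RP_le_linearization)
  finally show ?thesis
    by simp
qed

end

section \<open>Projected supergradient ascent\<close>

lemma closest_point_step_sq_dist:
  fixes U :: "'a::euclidean_space set"
  assumes "convex U" "closed U" "U \<noteq> {}" "u \<in> U"
  shows "(norm (closest_point U (x + v) - u))\<^sup>2 \<le> (norm (x - u))\<^sup>2 + 2 * (v \<bullet> (x - u)) + (norm v)\<^sup>2"
proof -
  have "norm (closest_point U (x + v) - u) \<le> norm (x + v - u)"
    using closest_point_lipschitz[OF assms(1-3), of "x + v" u] closest_point_self[OF assms(4)]
    by (simp add: dist_norm)
  then have "(norm (closest_point U (x + v) - u))\<^sup>2 \<le> (norm ((x - u) + v))\<^sup>2"
    by (simp add: power_mono algebra_simps)
  also have "\<dots> = (norm (x - u))\<^sup>2 + 2 * (v \<bullet> (x - u)) + (norm v)\<^sup>2"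
    by (simp add: power2_norm_eq_inner inner_add_left inner_add_right inner_commute)
  finally show ?thesis .
qed

lemma projected_supergradient_step:
  fixes U :: "'a::euclidean_space set"
  assumes "convex U" "closed U" "U \<noteq> {}" "u \<in> U" "\<gamma> > 0" "norm g \<le> L"
    and gap: "F - \<phi> \<le> g \<bullet> (u - x)"
  shows "2 * \<gamma> * (F - \<phi>) \<le> (norm (x - u))\<^sup>2 - (norm (closest_point U (x + \<gamma> *\<^sub>R g) - u))\<^sup>2 + \<gamma>\<^sup>2 * L\<^sup>2"
proof -
  have "(norm (closest_point U (x + \<gamma> *\<^sub>R g) - u))\<^sup>2
      \<le> (norm (x - u))\<^sup>2 - 2 * (\<gamma> * (g \<bullet> (u - x))) + (norm (\<gamma> *\<^sub>R g))\<^sup>2"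
    using closest_point_step_sq_dist[OF assms(1-4), of x "\<gamma> *\<^sub>R g"] by (simp add: algebra_simps)
  moreover have "(norm (\<gamma> *\<^sub>R g))\<^sup>2 \<le> \<gamma>\<^sup>2 * L\<^sup>2"
    using assms(5,6) by (simp add: power_mult_distrib power_mono)
  moreover have "\<gamma> * (F - \<phi>) \<le> \<gamma> * (g \<bullet> (u - x))"
    using gap assms(5) by simp
  ultimately show ?thesis
    by linarith
qed

lemma average_gap_le_of_telescoping:
  fixes \<phi> e :: "nat \<Rightarrow> real"
  assumes "\<gamma> > 0" "k > 0" "\<And>j. 0 \<le> e j"
    and step: "\<And>j. 2 * \<gamma> * (F - \<phi> j) \<le> e j - e (Suc j) + \<gamma>\<^sup>2 * G"
  shows "F - (1 / real k) * (\<Sum>j<k. \<phi> j) \<le> e 0 / (2 * real k * \<gamma>) + \<gamma> * G / 2"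
proof -
  define S where "S = (\<Sum>j<k. \<phi> j)"
  have "2 * \<gamma> * (real k * F - S) = (\<Sum>j<k. 2 * \<gamma> * (F - \<phi> j))"
    by (simp add: S_def sum_subtractf flip: sum_distrib_left)
  also have "\<dots> \<le> (\<Sum>j<k. e j - e (Suc j) + \<gamma>\<^sup>2 * G)"
    by (intro sum_mono step)
  also have "\<dots> = e 0 - e k + real k * (\<gamma>\<^sup>2 * G)"
    by (simp add: sum.distrib sum_lessThan_telescope')
  also have "\<dots> \<le> e 0 + real k * (\<gamma>\<^sup>2 * G)"
    using assms(3)[of k] by simp
  finally have bound: "2 * \<gamma> * (real k * F - S) \<le> e 0 + real k * (\<gamma>\<^sup>2 * G)" .
  have "F - (1 / real k) * S = 2 * \<gamma> * (real k * F - S) / (2 * real k * \<gamma>)"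
    using assms(1,2) by (simp add: field_simps)
  also have "\<dots> \<le> (e 0 + real k * (\<gamma>\<^sup>2 * G)) / (2 * real k * \<gamma>)"
    using bound assms(1,2) by (intro divide_right_mono) auto
  also have "\<dots> = e 0 / (2 * real k * \<gamma>) + \<gamma> * G / 2"
    using assms(1,2) by (simp add: field_simps power2_eq_square)
  finally show ?thesis
    unfolding S_def .
qed

theorem theorem4:
  fixes xi :: "'t::finite \<Rightarrow> real^'n::finite"
    and \<kappa> \<gamma> L :: real
    and U :: "(real^'t) set"
    and ystar :: "real^'n" and pstar p0 :: "real^'t"
    and p :: "nat \<Rightarrow> real^'t"
  assumes kappa: "\<kappa> > 0"
    and U_ne: "U \<noteq> {}" and U_closed: "closed U" and U_convex: "convex U"
    and U_sub: "U \<subseteq> prob_simplex"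
    and Sigma_pd: "\<forall>q\<in>U. pos_definite (Sigma_hat xi q)"
    and saddle: "saddle_point xi \<kappa> U ystar pstar"
    and gamma: "\<gamma> > 0"
    and p0: "p0 \<in> U"
    and p_0: "p 0 = p0"
    and p_Suc: "\<forall>j. p (Suc j) = closest_point U (p j + \<gamma> *\<^sub>R grad_p_f_RP xi (y_RP xi \<kappa> (p j)) (p j))"
    and L: "L \<ge> 0"
    and L_bound: "\<forall>j. norm (grad_p_f_RP xi (y_RP xi \<kappa> (p j)) (p j)) \<le> L"
  shows "\<forall>k::nat. k \<ge> 1 \<longrightarrow>
     0 \<le> phi_RP xi \<kappa> pstar - (1 / real k) * (\<Sum>j<k. phi_RP xi \<kappa> (p j)) \<and>
     phi_RP xi \<kappa> pstar - (1 / real k) * (\<Sum>j<k. phi_RP xi \<kappa> (p j))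
       \<le> (norm (p0 - pstar))^2 / (2 * real k * \<gamma>) + \<gamma> * L^2 / 2"
proof (intro allI impI conjI)
  note saddle_facts = phi_RP_le_saddle[OF kappa U_sub Sigma_pd saddle]
    saddle_gap_le_supergradient[OF kappa U_sub Sigma_pd saddle]
  have p_U: "p j \<in> U" for j
    using p0 p_0 p_Suc closest_point_in_set[OF U_closed U_ne] by (induction j) auto
  have pstar_U: "pstar \<in> U"
    using saddle by (simp add: saddle_point_def)
  define e where "e j = (norm (p j - pstar))\<^sup>2" for j
  have step: "2 * \<gamma> * (phi_RP xi \<kappa> pstar - phi_RP xi \<kappa> (p j)) \<le> e j - e (Suc j) + \<gamma>\<^sup>2 * L\<^sup>2" for j
    unfolding e_def p_Suc[rule_format] using L_bound
    by (intro projected_supergradient_step[OF U_convex U_closed U_ne pstar_U gamma]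
        saddle_facts(2)[OF p_U]) auto
  show "phi_RP xi \<kappa> pstar - (1 / real k) * (\<Sum>j<k. phi_RP xi \<kappa> (p j))
       \<le> (norm (p0 - pstar))\<^sup>2 / (2 * real k * \<gamma>) + \<gamma> * L\<^sup>2 / 2" if "k \<ge> 1" for k
    using average_gap_le_of_telescoping[where \<phi>="\<lambda>j. phi_RP xi \<kappa> (p j)" and e=e, OF gamma _ _ step, of k]
      that by (simp add: e_def p_0)
  show "0 \<le> phi_RP xi \<kappa> pstar - (1 / real k) * (\<Sum>j<k. phi_RP xi \<kappa> (p j))" if "k \<ge> 1" for k
  proof -
    have "(\<Sum>j<k. phi_RP xi \<kappa> (p j)) \<le> real k * phi_RP xi \<kappa> pstar"
      using sum_mono[of "{..<k}", OF saddle_facts(1)[OF p_U]] by simp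
    then show ?thesis
      using that by (simp add: field_simps)
  qed
qed

end
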